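(* Let $k:X\to Y$ be a homotopy equivalence and $x\in X$. If $Y$ is transfinitely $\pi_1$-commutative at $k(x)$, then $X$ is transfinitely $\pi_1$-commutative at $x$. In particular, if $f:(X,x)\to(Y,y)$ is a based homotopy equivalence, then $X$ is transfinitely $\pi_1$-commutative at $x$ if and only if $Y$ is transfinitely $\pi_1$-commutative at $y$.
   Context: Let $\mathbb{H}=\bigcup_nC_n$ be the Hawaiian earring ($C_n\subset\mathbb{R}^2$ the circle of radius $1/n$ centered at $(1/n,0)$, basepoint $b_0=(0,0)$), $\ell_n$ the counterclockwise loop on $C_n$. A sequence of loops $\alpha_n\in\Omega(X,x)$ is a null-sequence if every neighborhood of $x$ contains all but finitely many $\mathrm{Im}(\alpha_n)$; then there is a unique map $f:(\mathbb{H},b_0)\to(X,x)$ with $f\circ\ell_n=\alpha_n$. With $\mathcal{C}\subseteq[0,1]$ the middle-thirds Cantor set and $[0,1]\setminus\mathcal{C}=\bigcup_{n\ge1}\bigcup_{k=1}^{2^{n-1}}I_n^k$ (open intervals of length $3^{-n}$, indexed left to right for fixed $n$), $\ell_\tau$ is the loop with $\ell_\tau(\mathcal{C})=b_0$ equal to $\ell_{2^{n-1}+k-1}$ (linearly reparametrized) on $\overline{I_n^k}$, and $\prod_\tau\alpha_n:=f\circ\ell_\tau$. $X$ is transfinitely $\pi_1$-commutative at $x$ if $[\prod_\tau\alpha_n]=[\prod_\tau\alpha_{\phi(n)}]$ in $\pi_1(X,x)$ for every null-sequence $\alpha_n\in\Omega(X,x)$ and every bijection $\phi:\mathbb{N}\to\mathbb{N}$.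 *)

theory Defs
  imports "HOL-Analysis.Analysis"
begin

definition HE_circle :: "nat \<Rightarrow> complex set" where
  "HE_circle n = sphere (complex_of_real (1 / real n)) (1 / real n)"

definition hawaiian_earring :: "complex set" where
  "hawaiian_earring = (\<Union>n\<in>{1..}. HE_circle n)"

definition HE_base :: complex where
  "HE_base = 0"

definition HE_loop :: "nat \<Rightarrow> real \<Rightarrow> complex" where
  "HE_loop n t = complex_of_real (1 / real n)
      - complex_of_real (1 / real n) * exp (2 * pi * \<i> * complex_of_real t)"

text \<open>Left endpoint of the open interval I_n^k (n \<ge> 1, 1 \<le> k \<le> 2^(n-1)),
  of length 3^(-n); intervals indexed left to right for fixed n.\<close>
definition gap_left :: "nat \<Rightarrow> nat \<Rightarrow> real" where
  "gap_left n k = (\<Sum>i<n-1. 2 * real (((k - 1) div 2 ^ i) mod 2) / 3 ^ (n - 1 - i)) + 1 / 3 ^ n"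

definition gap_index :: "nat \<Rightarrow> nat \<Rightarrow> bool" where
  "gap_index n k \<longleftrightarrow> 1 \<le> n \<and> 1 \<le> k \<and> k \<le> 2 ^ (n - 1)"

text \<open>The loop l_tau: constant at the base point on the Cantor set, equal to the
  (linearly reparametrised) loop l_(2^(n-1)+k-1) on the closure of I_n^k.\<close>
definition tau_loop :: "real \<Rightarrow> complex" where
  "tau_loop t =
    (if \<exists>n k. gap_index n k \<and> t \<in> {gap_left n k .. gap_left n k + 1 / 3 ^ n}
     then (let (n, k) = (SOME (n, k). gap_index n k \<and> t \<in> {gap_left n k .. gap_left n k + 1 / 3 ^ n})
           in HE_loop (2 ^ (n - 1) + k - 1) ((t - gap_left n k) * 3 ^ n))
     else HE_base)"

definition loop_at :: "'a topology \<Rightarrow> 'a \<Rightarrow> (real \<Rightarrow> 'a) \<Rightarrow> bool" where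
  "loop_at X x g \<longleftrightarrow> pathin X g \<and> g 0 = x \<and> g 1 = x"

text \<open>Sequences are indexed by n \<ge> 1, as in the paper; the value at 0 is irrelevant.\<close>
definition null_sequence :: "'a topology \<Rightarrow> 'a \<Rightarrow> (nat \<Rightarrow> real \<Rightarrow> 'a) \<Rightarrow> bool" where
  "null_sequence X x \<alpha> \<longleftrightarrow>
     (\<forall>n\<ge>1. loop_at X x (\<alpha> n)) \<and>
     (\<forall>U. openin X U \<and> x \<in> U \<longrightarrow> (\<exists>N. \<forall>n\<ge>N. \<alpha> n ` {0..1} \<subseteq> U))"

definition induced_map :: "'a topology \<Rightarrow> 'a \<Rightarrow> (nat \<Rightarrow> real \<Rightarrow> 'a) \<Rightarrow> complex \<Rightarrow> 'a" where
  "induced_map X x \<alpha> = (SOME f. continuous_map (top_of_set hawaiian_earring) X f \<and> f HE_base = x \<and>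
       (\<forall>n\<ge>1. \<forall>t\<in>{0..1}. f (HE_loop n t) = \<alpha> n t))"

definition transfinite_product :: "'a topology \<Rightarrow> 'a \<Rightarrow> (nat \<Rightarrow> real \<Rightarrow> 'a) \<Rightarrow> real \<Rightarrow> 'a" where
  "transfinite_product X x \<alpha> = induced_map X x \<alpha> \<circ> tau_loop"

text \<open>Equality of classes in pi_1(X,x): homotopy of paths rel endpoints, parametrised on [0,1].\<close>
definition path_homotopic_in :: "'a topology \<Rightarrow> (real \<Rightarrow> 'a) \<Rightarrow> (real \<Rightarrow> 'a) \<Rightarrow> bool" where
  "path_homotopic_in X p q \<longleftrightarrow>
     (\<exists>h. continuous_map (prod_topology (top_of_set {0..1::real}) (top_of_set {0..1::real})) X h \<and>
          (\<forall>t\<in>{0..1}. h (0, t) = p t \<and> h (1, t) = q t) \<and>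
          (\<forall>s\<in>{0..1}. h (s, 0) = p 0 \<and> h (s, 1) = p 1))"

definition transfinitely_pi1_commutative :: "'a topology \<Rightarrow> 'a \<Rightarrow> bool" where
  "transfinitely_pi1_commutative X x \<longleftrightarrow>
     (\<forall>\<alpha> \<phi>. null_sequence X x \<alpha> \<and> bij_betw \<phi> {1..} {1..} \<longrightarrow>
        path_homotopic_in X (transfinite_product X x \<alpha>) (transfinite_product X x (\<alpha> \<circ> \<phi>)))"

definition homotopy_equivalence :: "'a topology \<Rightarrow> 'b topology \<Rightarrow> ('a \<Rightarrow> 'b) \<Rightarrow> bool" where
  "homotopy_equivalence X Y k \<longleftrightarrow> continuous_map X Y k \<and>
     (\<exists>g. continuous_map Y X g \<and>
          homotopic_with (\<lambda>h. True) X X (g \<circ> k) id \<and>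
          homotopic_with (\<lambda>h. True) Y Y (k \<circ> g) id)"

definition based_homotopy_equivalence ::
    "'a topology \<Rightarrow> 'a \<Rightarrow> 'b topology \<Rightarrow> 'b \<Rightarrow> ('a \<Rightarrow> 'b) \<Rightarrow> bool" where
  "based_homotopy_equivalence X x Y y f \<longleftrightarrow> x \<in> topspace X \<and> y \<in> topspace Y \<and>
     continuous_map X Y f \<and> f x = y \<and>
     (\<exists>g. continuous_map Y X g \<and> g y = x \<and>
          homotopic_with (\<lambda>h. h x = x) X X (g \<circ> f) id \<and>
          homotopic_with (\<lambda>h. h y = y) Y Y (f \<circ> g) id)"

end

theory Submission
  imports Defs
begin

text \<open>If \<open>g \<circ> k\<close> is freely homotopic to the identity by \<open>H\<close>, every loop \<open>R\<close> at \<open>x\<close> is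
  path-homotopic to \<open>\<gamma> \<cdot> (g \<circ> k \<circ> R) \<cdot> \<gamma>\<^sup>-\<^sup>1\<close>, where \<open>\<gamma>\<close> is the track of \<open>x\<close> under \<open>H\<close>;
  hence \<open>k \<circ> P \<simeq> k \<circ> Q\<close> forces \<open>P \<simeq> Q\<close>. Transfinite products are natural,
  \<open>k \<circ> \<Prod>\<^sub>\<tau> \<alpha>\<^sub>n = \<Prod>\<^sub>\<tau> (k \<circ> \<alpha>\<^sub>n)\<close>, and null-sequences are preserved by continuous maps
  and by permutations, so commutativity of transfinite products in \<open>Y\<close> pulls back to \<open>X\<close>.
  The based statement follows by applying this to \<open>f\<close> and to its based homotopy inverse.

  Most of the work goes into showing that transfinite products are loops at all: the map
  induced on the Hawaiian earring by a null-sequence is continuous because the preimage of a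
  closed set is a union of compact pieces on circles shrinking to the base point, and
  \<open>\<ell>\<^sub>\<tau>\<close> is the uniform limit of its finitely many pieces on the first gaps of the Cantor set.\<close>

section \<open>Gaps of the Cantor set\<close>

text \<open>\<open>cantor_cell m j\<close> is the interior of the \<open>j\<close>-th of the \<open>2\<^sup>m\<close> intervals of length
  \<open>3\<^sup>-\<^sup>m\<close> left at stage \<open>m\<close> of the construction, and \<open>middle_gap m j\<close> is the closure of the
  gap \<open>I\<^sub>m\<^sub>+\<^sub>1\<^sup>j\<^sup>+\<^sup>1\<close> removed from its middle; here indices start at \<open>0\<close>.\<close>

definition cantor_left :: "nat \<Rightarrow> nat \<Rightarrow> real" where
  "cantor_left m j = (\<Sum>i<m. 2 * real ((j div 2 ^ i) mod 2) / 3 ^ (m - i))"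

definition gap_len :: "nat \<Rightarrow> real" where
  "gap_len m = 1 / 3 ^ Suc m"

definition cantor_cell :: "nat \<Rightarrow> nat \<Rightarrow> real set" where
  "cantor_cell m j = {cantor_left m j <..< cantor_left m j + 3 * gap_len m}"

definition middle_gap :: "nat \<Rightarrow> nat \<Rightarrow> real set" where
  "middle_gap m j = {cantor_left m j + gap_len m .. cantor_left m j + 2 * gap_len m}"

lemma gap_len_pos: "0 < gap_len m"
  by (simp add: gap_len_def)

lemma gap_len_Suc: "3 * gap_len (Suc m) = gap_len m"
  by (simp add: gap_len_def)

lemma cantor_left_0 [simp]: "cantor_left 0 j = 0"
  by (simp add: cantor_left_def)

lemma cantor_left_Suc:
  "cantor_left (Suc m) j = cantor_left m (j div 2) + 6 * real (j mod 2) * gap_len (Suc m)"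
proof -
  have "cantor_left (Suc m) j = 2 * real (j mod 2) / 3 ^ Suc m +
     (\<Sum>i<m. 2 * real ((j div 2 ^ Suc i) mod 2) / 3 ^ (Suc m - Suc i))"
    unfolding cantor_left_def by (subst sum.lessThan_Suc_shift) simp
  also have "(\<Sum>i<m. 2 * real ((j div 2 ^ Suc i) mod 2) / 3 ^ (Suc m - Suc i)) = cantor_left m (j div 2)"
    unfolding cantor_left_def by (intro sum.cong refl) (simp add: div_mult2_eq)
  finally show ?thesis by (simp add: gap_len_def)
qed

lemma middle_gap_subset_cell: "middle_gap m j \<subseteq> cantor_cell m j"
  using gap_len_pos[of m] by (auto simp: middle_gap_def cantor_cell_def)

lemma cantor_cell_Suc_subset: "cantor_cell (Suc m) j \<subseteq> cantor_cell m (j div 2)"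
proof -
  have "j mod 2 = 0 \<or> j mod 2 = 1" by auto
  then show ?thesis
    using gap_len_pos[of "Suc m"] gap_len_Suc[of m] by (auto simp: cantor_cell_def cantor_left_Suc)
qed

lemma cantor_cell_Suc_disjoint_middle_gap: "cantor_cell (Suc m) j \<inter> middle_gap m (j div 2) = {}"
proof -
  have "j mod 2 = 0 \<or> j mod 2 = 1" by auto
  then show ?thesis
    using gap_len_pos[of "Suc m"] gap_len_Suc[of m]
    by (auto simp: cantor_cell_def middle_gap_def cantor_left_Suc)
qed

lemma cantor_cell_add_subset: "cantor_cell (m + p) j \<subseteq> cantor_cell m (j div 2 ^ p)"
proof (induction p arbitrary: j)
  case (Suc p)
  have "cantor_cell (m + Suc p) j \<subseteq> cantor_cell (m + p) (j div 2)"
    using cantor_cell_Suc_subset by simp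
  also have "\<dots> \<subseteq> cantor_cell m (j div 2 div 2 ^ p)" by (rule Suc)
  finally show ?case by (simp add: div_mult2_eq mult.commute)
qed simp

lemma cantor_cell_subset_unit: "cantor_cell m j \<subseteq> {0<..<1}"
  using cantor_cell_add_subset[of 0 m j] by (simp add: cantor_cell_def gap_len_def)

lemma cantor_cells_disjoint:
  "j < 2 ^ m \<Longrightarrow> j' < 2 ^ m \<Longrightarrow> j \<noteq> j' \<Longrightarrow> cantor_cell m j \<inter> cantor_cell m j' = {}"
proof (induction m arbitrary: j j')
  case (Suc m)
  show ?case
  proof (cases "j div 2 = j' div 2")
    case False
    moreover have "j div 2 < 2 ^ m" "j' div 2 < 2 ^ m" using Suc.prems by auto
    ultimately show ?thesis
      using Suc.IH cantor_cell_Suc_subset[of m j] cantor_cell_Suc_subset[of m j'] by blast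
  next
    case True
    with Suc.prems have "j mod 2 \<noteq> j' mod 2" by (metis div_mult_mod_eq)
    then have "(j mod 2 = 0 \<and> j' mod 2 = 1) \<or> (j mod 2 = 1 \<and> j' mod 2 = 0)" by auto
    then show ?thesis
      using True gap_len_pos[of "Suc m"] by (auto simp: cantor_cell_def cantor_left_Suc)
  qed
qed simp

lemma middle_gaps_disjoint:
  assumes "j < 2 ^ m" "j' < 2 ^ m'" "(m, j) \<noteq> (m', j')"
  shows "middle_gap m j \<inter> middle_gap m' j' = {}"
proof -
  have deeper: "middle_gap m j \<inter> middle_gap m' j' = {}"
    if "m < m'" "j < 2 ^ m" "j' < 2 ^ m'" for m j m' j'
  proof -
    obtain p where p: "m' = Suc m + p" using \<open>m < m'\<close> less_iff_Suc_add by auto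
    define i where "i = j' div 2 ^ p"
    have sub: "middle_gap m' j' \<subseteq> cantor_cell (Suc m) i"
      using middle_gap_subset_cell[of m' j'] cantor_cell_add_subset[of "Suc m" p j'] p i_def by auto
    show ?thesis
    proof (cases "i div 2 = j")
      case True
      then show ?thesis using sub cantor_cell_Suc_disjoint_middle_gap[of m i] by blast
    next
      case False
      have "i div 2 < 2 ^ m"
        using that(3) p unfolding i_def
        by (simp add: div_mult2_eq[symmetric] less_mult_imp_div_less power_add mult.commute)
      then have "cantor_cell m (i div 2) \<inter> cantor_cell m j = {}"
        using cantor_cells_disjoint False that(2) by blast
      then show ?thesis
        using sub cantor_cell_Suc_subset[of m i] middle_gap_subset_cell[of m j] by blast
    qed
  qed
  show ?thesis
  proof (cases "m = m'")
    case True
    then show ?thesis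
      using assms cantor_cells_disjoint[of j m j'] middle_gap_subset_cell by blast
  next
    case False
    then show ?thesis using deeper assms by (metis Int_commute linorder_neq_iff)
  qed
qed

lemma gap_index_iff: "gap_index n k \<longleftrightarrow> (\<exists>m j. n = Suc m \<and> k = Suc j \<and> j < 2 ^ m)"
  unfolding gap_index_def by (cases n; cases k) auto

lemma gap_left_Suc_Suc: "gap_left (Suc m) (Suc j) = cantor_left m j + gap_len m"
  unfolding gap_left_def cantor_left_def gap_len_def by (simp only: diff_Suc_1)

lemma gap_closure_iff:
  "gap_index n k \<and> t \<in> {gap_left n k .. gap_left n k + 1 / 3 ^ n} \<longleftrightarrow>
     (\<exists>m j. n = Suc m \<and> k = Suc j \<and> j < 2 ^ m \<and> t \<in> middle_gap m j)"
proof -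
  have "{gap_left n k .. gap_left n k + 1 / 3 ^ n} = middle_gap m j"
    if "n = Suc m" "k = Suc j" for m j
    using that unfolding middle_gap_def by (simp add: gap_left_Suc_Suc gap_len_def algebra_simps)
  then show ?thesis unfolding gap_index_iff by blast
qed

section \<open>The Hawaiian earring\<close>

lemma cis_two_pi_eq_cases:
  assumes "t \<in> {0..1}" "s \<in> {0..1}" "cis (2 * pi * t) = cis (2 * pi * s)"
  shows "t = s \<or> (t = 0 \<and> s = 1) \<or> (t = 1 \<and> s = 0)"
proof -
  from assms(3) have "exp (\<i> * complex_of_real (2 * pi * t)) = exp (\<i> * complex_of_real (2 * pi * s))"
    by (simp add: cis_conv_exp)
  then obtain k :: int
    where "\<i> * complex_of_real (2 * pi * t) = \<i> * complex_of_real (2 * pi * s) + of_int (2 * k) * pi * \<i>"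
    unfolding exp_eq by blast
  then have "Im (\<i> * complex_of_real (2 * pi * t)) = Im (\<i> * complex_of_real (2 * pi * s) + of_int (2 * k) * pi * \<i>)"
    by simp
  then have "2 * pi * t = 2 * pi * (s + of_int k)" by (simp add: algebra_simps)
  then have tk: "t = s + of_int k" by simp
  then have "of_int k \<le> (1::real)" "of_int k \<ge> (-1::real)" using assms(1,2) by auto
  then have "k = -1 \<or> k = 0 \<or> k = 1" by linarith
  then show ?thesis using tk assms(1,2) by auto
qed

lemma HE_loop_cis:
  "HE_loop n t = complex_of_real (1 / real n) - complex_of_real (1 / real n) * cis (2 * pi * t)"
proof -
  have "exp (2 * pi * \<i> * complex_of_real t) = cis (2 * pi * t)"
    by (simp add: cis_conv_exp mult.commute mult.left_commute)
  then show ?thesis unfolding HE_loop_def by simp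
qed

lemma HE_loop_0 [simp]: "HE_loop n 0 = 0"
  and HE_loop_1 [simp]: "HE_loop n 1 = 0"
  by (simp_all add: HE_loop_cis)

lemma continuous_on_HE_loop: "continuous_on S (HE_loop n)"
  unfolding HE_loop_def by (intro continuous_intros)

lemma norm_HE_loop_le: "norm (HE_loop n t) \<le> 2 / real n"
proof -
  have "norm (HE_loop n t) \<le> norm (complex_of_real (1 / real n))
      + norm (complex_of_real (1 / real n) * cis (2 * pi * t))"
    unfolding HE_loop_cis by (rule norm_triangle_ineq4)
  then show ?thesis by (simp add: norm_mult norm_divide)
qed

lemma HE_loop_in_circle: "HE_loop n t \<in> HE_circle n"
  by (simp add: HE_circle_def HE_loop_cis dist_norm norm_mult norm_divide)

lemma HE_loop_in_earring: "n \<ge> 1 \<Longrightarrow> HE_loop n t \<in> hawaiian_earring"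
  unfolding hawaiian_earring_def using HE_loop_in_circle by auto

lemma HE_loop_eq_0:
  assumes "n \<ge> 1" "t \<in> {0..1}" "HE_loop n t = 0"
  shows "t = 0 \<or> t = 1"
proof -
  have "complex_of_real (1 / real n) * (1 - cis (2 * pi * t)) = 0"
    using assms(3) unfolding HE_loop_cis by (simp add: algebra_simps)
  then have "cis (2 * pi * t) = cis (2 * pi * 0)" using assms(1) by simp
  then show ?thesis using cis_two_pi_eq_cases[of t 0] assms(2) by auto
qed

lemma circles_through_same_point:
  fixes z :: complex
  assumes "cmod (complex_of_real r - z) = r" "cmod (complex_of_real r' - z) = r'" "z \<noteq> 0"
  shows "r = r'"
proof -
  have a: "(r - Re z)\<^sup>2 + (Im z)\<^sup>2 = r\<^sup>2"
    using assms(1) arg_cong[OF assms(1), of "\<lambda>u. u\<^sup>2"] unfolding cmod_power2 by simp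
  have b: "(r' - Re z)\<^sup>2 + (Im z)\<^sup>2 = r'\<^sup>2"
    using arg_cong[OF assms(2), of "\<lambda>u. u\<^sup>2"] unfolding cmod_power2 by simp
  from a b have "2 * (r - r') * Re z = 0" by (simp add: power2_eq_square algebra_simps)
  moreover have "Re z \<noteq> 0"
  proof
    assume "Re z = 0"
    with a have "Im z = 0" by (simp add: power2_eq_square)
    with \<open>Re z = 0\<close> assms(3) show False by (simp add: complex_eq_iff)
  qed
  ultimately show ?thesis by simp
qed

lemma HE_loop_inj:
  assumes "n \<ge> 1" "m \<ge> 1" "t \<in> {0..1}" "s \<in> {0..1}"
    and eq: "HE_loop n t = HE_loop m s" and nz: "HE_loop n t \<noteq> 0"
  shows "n = m \<and> t = s"
proof -
  have "cmod (complex_of_real (1 / real n) - HE_loop n t) = 1 / real n"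
    "cmod (complex_of_real (1 / real m) - HE_loop n t) = 1 / real m"
    using HE_loop_in_circle[of n t] HE_loop_in_circle[of m s] eq
    by (simp_all add: HE_circle_def dist_norm)
  then have "1 / real n = 1 / real m" using nz by (rule circles_through_same_point)
  then have nm: "n = m" using assms by simp
  with eq have "cis (2 * pi * t) = cis (2 * pi * s)"
    using assms(1) unfolding HE_loop_cis by simp
  then have "t = s \<or> (t = 0 \<and> s = 1) \<or> (t = 1 \<and> s = 0)"
    using cis_two_pi_eq_cases assms(3,4) by blast
  then show ?thesis using nm nz by auto
qed

lemma HE_circle_eq_image: "n \<ge> 1 \<Longrightarrow> z \<in> HE_circle n \<Longrightarrow> \<exists>t\<in>{0..1}. z = HE_loop n t"
proof -
  assume "n \<ge> 1" "z \<in> HE_circle n"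
  define r where "r = 1 / real n"
  have r: "r > 0" using \<open>n \<ge> 1\<close> unfolding r_def by simp
  define u where "u = (complex_of_real r - z) / complex_of_real r"
  have "cmod (complex_of_real r - z) = r"
    using \<open>z \<in> HE_circle n\<close> unfolding HE_circle_def r_def by (simp add: dist_norm)
  then have "cmod u = 1" unfolding u_def using r by (simp add: norm_divide)
  then have th: "0 \<le> Arg2pi u" "Arg2pi u < 2 * pi" "u = exp (\<i> * complex_of_real (Arg2pi u))"
    using Arg2pi[of u] unfolding is_Arg_def by auto
  define t where "t = Arg2pi u / (2 * pi)"
  have "t \<in> {0..1}" using th unfolding t_def by (auto simp: divide_simps)
  moreover have "cis (2 * pi * t) = u" unfolding t_def using th(3) by (simp add: cis_conv_exp)
  then have "HE_loop n t = z"
    unfolding HE_loop_cis r_def[symmetric] u_def using r by (simp add: field_simps)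
  ultimately show ?thesis by metis
qed

lemma hawaiian_earring_eq: "hawaiian_earring = {HE_loop n t | n t. n \<ge> 1 \<and> t \<in> {0..1}}"
  unfolding hawaiian_earring_def using HE_circle_eq_image HE_loop_in_circle by fastforce

section \<open>Continuity of \<open>\<ell>\<^sub>\<tau>\<close>\<close>

text \<open>The piece of \<open>\<ell>\<^sub>\<tau>\<close> on \<open>middle_gap m j\<close> (the index \<open>2\<^sup>n\<^sup>-\<^sup>1 + k - 1\<close> becomes
  \<open>2\<^sup>m + j\<close>), extended by the base point.\<close>

definition gap_loop :: "nat \<Rightarrow> nat \<Rightarrow> real \<Rightarrow> complex" where
  "gap_loop m j t =
     HE_loop (2 ^ m + j) (max 0 (min 1 ((t - (cantor_left m j + gap_len m)) / gap_len m)))"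

lemma gap_loop_outside:
  assumes "t \<notin> middle_gap m j"
  shows "gap_loop m j t = 0"
proof -
  let ?a = "cantor_left m j + gap_len m"
  from assms have "t < ?a \<or> ?a + gap_len m < t" by (auto simp: middle_gap_def)
  then have "(t - ?a) / gap_len m < 0 \<or> 1 < (t - ?a) / gap_len m"
    using gap_len_pos[of m] by (auto simp: divide_neg_pos less_divide_eq)
  then show ?thesis unfolding gap_loop_def by auto
qed

lemma norm_gap_loop_le: "norm (gap_loop m j t) \<le> 2 / 2 ^ m"
proof -
  have "norm (gap_loop m j t) \<le> 2 / real (2 ^ m + j)"
    unfolding gap_loop_def by (rule norm_HE_loop_le)
  also have "\<dots> \<le> 2 / 2 ^ m" by (simp add: frac_le)
  finally show ?thesis .
qed

lemma continuous_on_gap_loop: "continuous_on S (gap_loop m j)"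
  unfolding gap_loop_def
  by (rule continuous_on_compose2[OF continuous_on_HE_loop[of UNIV]])
     (use gap_len_pos[of m] in \<open>auto intro!: continuous_intros\<close>)

lemma tau_loop_on_gap:
  assumes "j < 2 ^ m" "t \<in> middle_gap m j"
  shows "tau_loop t = gap_loop m j t"
proof -
  let ?P = "\<lambda>(n, k). gap_index n k \<and> t \<in> {gap_left n k .. gap_left n k + 1 / 3 ^ n}"
  have P: "?P p \<longleftrightarrow> p = (Suc m, Suc j)" for p
  proof
    assume "?P p"
    then obtain m' j' where "p = (Suc m', Suc j')" "j' < 2 ^ m'" "t \<in> middle_gap m' j'"
      unfolding split_beta gap_closure_iff by (metis prod.collapse)
    with assms middle_gaps_disjoint[of j' m' j m] show "p = (Suc m, Suc j)" by blast
  qed (use assms in \<open>simp only: split_beta gap_closure_iff, auto\<close>)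
  then have "(SOME p. ?P p) = (Suc m, Suc j)" by simp
  moreover have "(t - gap_left (Suc m) (Suc j)) * 3 ^ Suc m
      = max 0 (min 1 ((t - (cantor_left m j + gap_len m)) / gap_len m))"
  proof -
    have "(t - (cantor_left m j + gap_len m)) / gap_len m \<in> {0..1}"
      using assms(2) gap_len_pos[of m] by (auto simp: middle_gap_def divide_simps)
    then show ?thesis by (simp add: gap_left_Suc_Suc gap_len_def)
  qed
  moreover have "\<exists>n k. gap_index n k \<and> t \<in> {gap_left n k .. gap_left n k + 1 / 3 ^ n}"
    using P[of "(Suc m, Suc j)"] by blast
  ultimately show ?thesis
    unfolding tau_loop_def gap_loop_def by simp
qed

lemma tau_loop_off_gaps:
  assumes "\<And>m j. j < 2 ^ m \<Longrightarrow> t \<notin> middle_gap m j"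
  shows "tau_loop t = 0"
proof -
  have "\<not> (\<exists>n k. gap_index n k \<and> t \<in> {gap_left n k .. gap_left n k + 1 / 3 ^ n})"
    using assms unfolding gap_closure_iff by blast
  then show ?thesis unfolding tau_loop_def HE_base_def by (rule if_not_P)
qed

lemma tau_loop_in_earring: "tau_loop t \<in> hawaiian_earring"
proof (cases "\<exists>m j. j < 2 ^ m \<and> t \<in> middle_gap m j")
  case True
  then show ?thesis
    using tau_loop_on_gap HE_loop_in_earring unfolding gap_loop_def by auto
next
  case False
  then show ?thesis
    using tau_loop_off_gaps HE_loop_in_earring[of 1 0] by auto
qed

lemma tau_loop_0 [simp]: "tau_loop 0 = 0"
  and tau_loop_1 [simp]: "tau_loop 1 = 0"
  by (rule tau_loop_off_gaps, use middle_gap_subset_cell cantor_cell_subset_unit in fastforce)+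

lemma tau_loop_approx:
  "norm (tau_loop t - (\<Sum>(m, j)\<in>(SIGMA m:{..<M}. {..<2 ^ m}). gap_loop m j t)) \<le> 2 / 2 ^ M"
proof (cases "\<exists>m j. j < 2 ^ m \<and> t \<in> middle_gap m j")
  case True
  then obtain m j where mj: "j < 2 ^ m" "t \<in> middle_gap m j" by blast
  let ?F = "SIGMA m:{..<M}. {..<(2::nat) ^ m}"
  have "(\<Sum>(m', j')\<in>?F. gap_loop m' j' t) = (\<Sum>p\<in>?F. if p = (m, j) then gap_loop m j t else 0)"
  proof (intro sum.cong refl)
    fix p assume "p \<in> ?F"
    then show "(case p of (m', j') \<Rightarrow> gap_loop m' j' t) = (if p = (m, j) then gap_loop m j t else 0)"
      using mj middle_gaps_disjoint[of "snd p" "fst p" j m] gap_loop_outside[of t "fst p" "snd p"]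
      by (cases p) auto
  qed
  also have "\<dots> = (if (m, j) \<in> ?F then gap_loop m j t else 0)"
    by (simp add: sum.delta)
  finally have sum: "(\<Sum>(m', j')\<in>?F. gap_loop m' j' t) = (if m < M then gap_loop m j t else 0)"
    using mj by simp
  show ?thesis
  proof (cases "m < M")
    case False
    have "norm (gap_loop m j t) \<le> 2 / 2 ^ m" by (rule norm_gap_loop_le)
    also have "\<dots> \<le> 2 / 2 ^ M" using False by (simp add: frac_le)
    finally show ?thesis using sum False tau_loop_on_gap[OF mj] by simp
  qed (use sum tau_loop_on_gap[OF mj] in simp)
next
  case False
  then show ?thesis
    using tau_loop_off_gaps gap_loop_outside by (simp add: sum.neutral split_beta)
qed

lemma continuous_on_tau_loop: "continuous_on S tau_loop"
proof (rule uniform_limit_theorem)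
  show "\<forall>\<^sub>F M in sequentially.
      continuous_on S (\<lambda>t. \<Sum>(m, j)\<in>(SIGMA m:{..<M}. {..<2 ^ m}). gap_loop m j t)"
    by (intro always_eventually allI continuous_on_sum) (auto simp: split_beta continuous_on_gap_loop)
  show "uniform_limit S (\<lambda>M t. \<Sum>(m, j)\<in>(SIGMA m:{..<M}. {..<2 ^ m}). gap_loop m j t) tau_loop sequentially"
    unfolding uniform_limit_iff
  proof (intro allI impI)
    fix e :: real assume "e > 0"
    obtain N :: nat where N: "2 / e < 2 ^ N" using real_arch_pow[of 2 "2 / e"] by auto
    have "\<forall>t\<in>S. dist (\<Sum>(m, j)\<in>(SIGMA m:{..<M}. {..<2 ^ m}). gap_loop m j t) (tau_loop t) < e"
      if "M \<ge> N" for M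
    proof
      fix t
      have "2 / (2::real) ^ M \<le> 2 / 2 ^ N" using that by (simp add: frac_le)
      also have "\<dots> < e" using N \<open>e > 0\<close> by (simp add: field_simps)
      finally show "dist (\<Sum>(m, j)\<in>(SIGMA m:{..<M}. {..<2 ^ m}). gap_loop m j t) (tau_loop t) < e"
        using tau_loop_approx[of t M] by (simp add: dist_norm norm_minus_commute)
    qed
    then show "\<forall>\<^sub>F M in sequentially.
        \<forall>t\<in>S. dist (\<Sum>(m, j)\<in>(SIGMA m:{..<M}. {..<2 ^ m}). gap_loop m j t) (tau_loop t) < e"
      unfolding eventually_sequentially by blast
  qed
qed simp

section \<open>Maps induced by null-sequences\<close>

lemma closed_UN_shrinking_to_0:
  fixes S :: "nat \<Rightarrow> 'a::real_normed_vector set" and r :: "nat \<Rightarrow> real"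
  assumes closed: "\<And>n. n \<ge> 1 \<Longrightarrow> closed (S n)"
    and small: "\<And>n. n \<ge> 1 \<Longrightarrow> S n \<subseteq> cball 0 (r n)" and "r \<longlonglongrightarrow> 0"
    and "0 \<in> (\<Union>n\<in>{1..}. S n)"
  shows "closed (\<Union>n\<in>{1..}. S n)"
proof -
  have "w \<in> (\<Union>n\<in>{1..}. S n)" if w: "w \<in> closure (\<Union>n\<in>{1..}. S n)" for w
  proof (cases "w = 0")
    case False
    then have "\<forall>\<^sub>F n in sequentially. dist (r n) 0 < norm w / 2"
      using tendstoD[OF \<open>r \<longlonglongrightarrow> 0\<close>, of "norm w / 2"] by simp
    then obtain N where N: "\<And>n. n \<ge> N \<Longrightarrow> r n < norm w / 2"
      unfolding eventually_sequentially dist_real_def by (fastforce simp: abs_less_iff)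
    have "(\<Union>n\<in>{1..}. S n) \<subseteq> (\<Union>n\<in>{1..<N}. S n) \<union> cball 0 (norm w / 2)"
    proof
      fix z assume "z \<in> (\<Union>n\<in>{1..}. S n)"
      then obtain n where "n \<ge> 1" "z \<in> S n" by auto
      then show "z \<in> (\<Union>n\<in>{1..<N}. S n) \<union> cball 0 (norm w / 2)"
        using small[of n] N[of n] by (cases "n < N") auto
    qed
    moreover have "closed ((\<Union>n\<in>{1..<N}. S n) \<union> cball 0 (norm w / 2))"
      using closed by (auto intro!: closed_Un closed_UN)
    ultimately have "w \<in> (\<Union>n\<in>{1..<N}. S n) \<union> cball 0 (norm w / 2)"
      using w closure_minimal by blast
    then show ?thesis using False by auto
  qed (use assms(4) in simp)
  then show ?thesis unfolding closure_subset_eq[symmetric] by blast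
qed

lemma null_sequenceD:
  assumes "null_sequence X x \<alpha>" "n \<ge> 1"
  shows "pathin X (\<alpha> n)" "\<alpha> n 0 = x" "\<alpha> n 1 = x"
  using assms unfolding null_sequence_def loop_at_def by auto

lemma null_sequence_in_topspace:
  assumes "null_sequence X x \<alpha>" "n \<ge> 1" "t \<in> {0..1}"
  shows "\<alpha> n t \<in> topspace X"
  using null_sequenceD(1)[OF assms(1,2)] assms(3) by (auto simp: pathin_def continuous_map_def)

lemma null_sequence_base_in_topspace: "null_sequence X x \<alpha> \<Longrightarrow> x \<in> topspace X"
  using null_sequence_in_topspace[of X x \<alpha> 1 0] null_sequenceD(2)[of X x \<alpha> 1] by simp

text \<open>An explicit map with the properties required of \<open>induced_map\<close>, so that its
  choice operator is not applied to an empty predicate.\<close>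

definition earring_map :: "'a \<Rightarrow> (nat \<Rightarrow> real \<Rightarrow> 'a) \<Rightarrow> complex \<Rightarrow> 'a" where
  "earring_map x \<alpha> z = (if z = 0 then x else
     (case SOME (n, t). n \<ge> 1 \<and> t \<in> {0..1} \<and> z = HE_loop n t of (n, t) \<Rightarrow> \<alpha> n t))"

lemma earring_map_0: "earring_map x \<alpha> 0 = x"
  by (simp add: earring_map_def)

lemma earring_map_HE_loop:
  assumes "n \<ge> 1" "t \<in> {0..1}" "\<alpha> n 0 = x" "\<alpha> n 1 = x"
  shows "earring_map x \<alpha> (HE_loop n t) = \<alpha> n t"
proof (cases "HE_loop n t = 0")
  case True
  then have "t = 0 \<or> t = 1" using HE_loop_eq_0 assms(1,2) by blast
  then show ?thesis using True assms(3,4) by (auto simp: earring_map_def)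
next
  case False
  let ?P = "\<lambda>(n', t'). n' \<ge> 1 \<and> t' \<in> {0..1} \<and> HE_loop n t = HE_loop n' t'"
  have "?P p \<longleftrightarrow> p = (n, t)" for p
    using assms(1,2) HE_loop_inj[OF _ _ _ _ _ False] by (cases p) auto
  then have "(SOME p. ?P p) = (n, t)" by simp
  then show ?thesis using False by (simp add: earring_map_def)
qed

lemma earring_map_null_sequence:
  assumes "null_sequence X x \<alpha>" "n \<ge> 1" "t \<in> {0..1}"
  shows "earring_map x \<alpha> (HE_loop n t) = \<alpha> n t"
  using assms(2,3) by (intro earring_map_HE_loop null_sequenceD[OF assms(1)])

lemma compact_HE_loop_image_preimage:
  assumes "pathin X \<gamma>" "closedin X K"
  shows "compact (HE_loop n ` {t \<in> {0..1}. \<gamma> t \<in> K})"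
proof -
  have "closedin (top_of_set {0..1}) {t \<in> {0..1}. \<gamma> t \<in> K}"
    using closedin_continuous_map_preimage[OF assms(1)[unfolded pathin_def] assms(2)] by simp
  then have "closed {t \<in> {0..1::real}. \<gamma> t \<in> K}"
    using closedin_closed_trans by blast
  then have "compact ({0..1} \<inter> {t \<in> {0..1::real}. \<gamma> t \<in> K})"
    by (intro compact_Int_closed compact_Icc)
  moreover have "{0..1} \<inter> {t \<in> {0..1::real}. \<gamma> t \<in> K} = {t \<in> {0..1}. \<gamma> t \<in> K}"
    by blast
  ultimately show ?thesis
    by (intro compact_continuous_image[OF continuous_on_HE_loop]) simp
qed

lemma earring_map_preimage:
  assumes null: "null_sequence X x \<alpha>"
  shows "{z \<in> hawaiian_earring. earring_map x \<alpha> z \<in> K}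
    = (\<Union>n\<in>{1..}. HE_loop n ` {t \<in> {0..1}. \<alpha> n t \<in> K})"
proof (intro equalityI subsetI)
  fix z assume "z \<in> {z \<in> hawaiian_earring. earring_map x \<alpha> z \<in> K}"
  then obtain n t where "n \<ge> 1" "t \<in> {0..1}" "z = HE_loop n t" "earring_map x \<alpha> z \<in> K"
    unfolding hawaiian_earring_eq by auto
  then show "z \<in> (\<Union>n\<in>{1..}. HE_loop n ` {t \<in> {0..1}. \<alpha> n t \<in> K})"
    using earring_map_null_sequence[OF null] by auto
next
  fix z assume "z \<in> (\<Union>n\<in>{1..}. HE_loop n ` {t \<in> {0..1}. \<alpha> n t \<in> K})"
  then obtain n t where "n \<ge> 1" "t \<in> {0..1}" "z = HE_loop n t" "\<alpha> n t \<in> K"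
    by auto
  then show "z \<in> {z \<in> hawaiian_earring. earring_map x \<alpha> z \<in> K}"
    using earring_map_null_sequence[OF null] HE_loop_in_earring by auto
qed

lemma closed_UN_HE_loop_preimage:
  assumes null: "null_sequence X x \<alpha>" and K: "closedin X K"
  shows "closed (\<Union>n\<in>{1..}. HE_loop n ` {t \<in> {0..1}. \<alpha> n t \<in> K})"
proof -
  define S where "S n = HE_loop n ` {t \<in> {0..1}. \<alpha> n t \<in> K}" for n
  have closed: "closed (S n)" if "n \<ge> 1" for n
    unfolding S_def
    by (intro compact_imp_closed compact_HE_loop_image_preimage[OF null_sequenceD(1)[OF null that] K])
  have "closed (\<Union>n\<in>{1..}. S n)"
  proof (cases "x \<in> K")
    case True
    show ?thesis
    proof (rule closed_UN_shrinking_to_0[OF closed])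
      show "S n \<subseteq> cball 0 (2 / real n)" for n
        using norm_HE_loop_le[of n] by (auto simp: S_def)
      show "(\<lambda>n. 2 / real n) \<longlonglongrightarrow> 0" by (rule lim_const_over_n)
      have "HE_loop 1 0 \<in> S 1"
        unfolding S_def using True null_sequenceD(2)[OF null, of 1] by (intro imageI) simp
      then show "0 \<in> (\<Union>n\<in>{1..}. S n)" by force
    qed
  next
    case False
    have "openin X (topspace X - K)" "x \<in> topspace X - K"
      using K False null_sequence_base_in_topspace[OF null] by auto
    then obtain N where N: "\<And>n. n \<ge> N \<Longrightarrow> \<alpha> n ` {0..1} \<subseteq> topspace X - K"
      using null unfolding null_sequence_def by blast
    then have "S n = {}" if "n \<ge> N" for n
      using that unfolding S_def by blast
    then have "n < N" if "z \<in> S n" for z n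
      using that not_less by blast
    then have "(\<Union>n\<in>{1..}. S n) = (\<Union>n\<in>{1..<N}. S n)"
      by fastforce
    moreover have "closed (\<Union>n\<in>{1..<N}. S n)"
      using closed by (intro closed_UN) auto
    ultimately show ?thesis by simp
  qed
  then show ?thesis by (simp add: S_def)
qed

lemma continuous_map_earring_map:
  assumes null: "null_sequence X x \<alpha>"
  shows "continuous_map (top_of_set hawaiian_earring) X (earring_map x \<alpha>)"
  unfolding continuous_map_closedin
proof (intro conjI allI impI)
  show "earring_map x \<alpha> \<in> topspace (top_of_set hawaiian_earring) \<rightarrow> topspace X"
  proof
    fix z assume "z \<in> topspace (top_of_set hawaiian_earring)"
    then obtain n t where "n \<ge> 1" "t \<in> {0..1}" "z = HE_loop n t"
      unfolding hawaiian_earring_eq by auto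
    then show "earring_map x \<alpha> z \<in> topspace X"
      using earring_map_null_sequence[OF null] null_sequence_in_topspace[OF null] by simp
  qed
  fix K assume K: "closedin X K"
  have "{z \<in> hawaiian_earring. earring_map x \<alpha> z \<in> K}
      = hawaiian_earring \<inter> (\<Union>n\<in>{1..}. HE_loop n ` {t \<in> {0..1}. \<alpha> n t \<in> K})"
    unfolding earring_map_preimage[OF null, symmetric] by blast
  then show "closedin (top_of_set hawaiian_earring)
      {z \<in> topspace (top_of_set hawaiian_earring). earring_map x \<alpha> z \<in> K}"
    using closedin_closed_Int[OF closed_UN_HE_loop_preimage[OF null K]] by simp
qed

lemma induced_map_spec:
  assumes "null_sequence X x \<alpha>"
  shows "continuous_map (top_of_set hawaiian_earring) X (induced_map X x \<alpha>)"
    and "induced_map X x \<alpha> HE_base = x"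
    and "\<And>n t. n \<ge> 1 \<Longrightarrow> t \<in> {0..1} \<Longrightarrow> induced_map X x \<alpha> (HE_loop n t) = \<alpha> n t"
proof -
  have "\<exists>f. continuous_map (top_of_set hawaiian_earring) X f \<and> f HE_base = x \<and>
       (\<forall>n\<ge>1. \<forall>t\<in>{0..1}. f (HE_loop n t) = \<alpha> n t)"
  proof (intro exI conjI allI impI ballI)
    show "continuous_map (top_of_set hawaiian_earring) X (earring_map x \<alpha>)"
      by (rule continuous_map_earring_map[OF assms])
    show "earring_map x \<alpha> HE_base = x"
      by (simp add: HE_base_def earring_map_0)
    show "earring_map x \<alpha> (HE_loop n t) = \<alpha> n t" if "1 \<le> n" "t \<in> {0..1}" for n t
      using that by (rule earring_map_null_sequence[OF assms])
  qed
  then have "continuous_map (top_of_set hawaiian_earring) X (induced_map X x \<alpha>) \<and>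
      induced_map X x \<alpha> HE_base = x \<and> (\<forall>n\<ge>1. \<forall>t\<in>{0..1}. induced_map X x \<alpha> (HE_loop n t) = \<alpha> n t)"
    unfolding induced_map_def by (rule someI_ex)
  then show "continuous_map (top_of_set hawaiian_earring) X (induced_map X x \<alpha>)"
    and "induced_map X x \<alpha> HE_base = x"
    and "\<And>n t. n \<ge> 1 \<Longrightarrow> t \<in> {0..1} \<Longrightarrow> induced_map X x \<alpha> (HE_loop n t) = \<alpha> n t"
    by blast+
qed

lemma eq_on_hawaiian_earringI:
  assumes "\<And>n t. n \<ge> 1 \<Longrightarrow> t \<in> {0..1} \<Longrightarrow> f (HE_loop n t) = g (HE_loop n t)"
    and "z \<in> hawaiian_earring"
  shows "f z = g z"
  using assms unfolding hawaiian_earring_eq by blast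

lemma null_sequence_compose:
  assumes null: "null_sequence X x \<alpha>" and k: "continuous_map X Y k"
  shows "null_sequence Y (k x) (\<lambda>n. k \<circ> \<alpha> n)"
  unfolding null_sequence_def
proof (intro conjI allI impI)
  fix n :: nat assume "1 \<le> n"
  then show "loop_at Y (k x) (k \<circ> \<alpha> n)"
    using null_sequenceD[OF null] pathin_compose[OF _ k] by (simp add: loop_at_def)
next
  fix U assume "openin Y U \<and> k x \<in> U"
  then have "openin X {y \<in> topspace X. k y \<in> U}" "x \<in> {y \<in> topspace X. k y \<in> U}"
    using k null_sequence_base_in_topspace[OF null] by (auto simp: continuous_map)
  then obtain N where "\<And>n. n \<ge> N \<Longrightarrow> \<alpha> n ` {0..1} \<subseteq> {y \<in> topspace X. k y \<in> U}"
    using null unfolding null_sequence_def by blast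
  then show "\<exists>N. \<forall>n\<ge>N. (k \<circ> \<alpha> n) ` {0..1} \<subseteq> U"
    by (fastforce simp: image_subset_iff)
qed

lemma null_sequence_permute:
  assumes null: "null_sequence X x \<alpha>" and \<phi>: "bij_betw \<phi> {1..} {1..}"
  shows "null_sequence X x (\<alpha> \<circ> \<phi>)"
  unfolding null_sequence_def
proof (intro conjI allI impI)
  fix n :: nat assume "1 \<le> n"
  then have "\<phi> n \<ge> 1" using \<phi> by (auto simp: bij_betw_def)
  then show "loop_at X x ((\<alpha> \<circ> \<phi>) n)" using null by (simp add: null_sequence_def)
next
  fix U assume "openin X U \<and> x \<in> U"
  then obtain N where N: "\<And>n. n \<ge> N \<Longrightarrow> \<alpha> n ` {0..1} \<subseteq> U"
    using null unfolding null_sequence_def by blast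
  \<comment> \<open>only the finitely many indices mapped below \<open>N\<close> can fail\<close>
  define F where "F = {n \<in> {1..}. \<phi> n < N}"
  have "inj_on \<phi> F" using \<phi> unfolding bij_betw_def F_def by (auto intro: inj_on_subset)
  moreover have "\<phi> ` F \<subseteq> {..<N}" by (auto simp: F_def)
  ultimately have "finite F" using finite_imageD finite_subset by blast
  then obtain M where "F \<subseteq> {..<M}" using finite_nat_bounded by blast
  have "(\<alpha> \<circ> \<phi>) n ` {0..1} \<subseteq> U" if "n \<ge> max M 1" for n
  proof -
    have "n \<notin> F" using \<open>F \<subseteq> {..<M}\<close> that by auto
    then have "\<phi> n \<ge> N" using that by (auto simp: F_def)
    then show ?thesis using N by simp
  qed
  then show "\<exists>N. \<forall>n\<ge>N. (\<alpha> \<circ> \<phi>) n ` {0..1} \<subseteq> U" by blast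
qed

lemma continuous_map_tau_loop:
  "continuous_map (top_of_set {0..1}) (top_of_set hawaiian_earring) tau_loop"
  unfolding continuous_map_subtopology_eu using continuous_on_tau_loop tau_loop_in_earring by blast

lemma transfinite_product_loop:
  assumes "null_sequence X x \<alpha>"
  shows "pathin X (transfinite_product X x \<alpha>)"
    and "transfinite_product X x \<alpha> 0 = x" "transfinite_product X x \<alpha> 1 = x"
proof -
  show "pathin X (transfinite_product X x \<alpha>)"
    unfolding pathin_def transfinite_product_def
    by (rule continuous_map_compose[OF continuous_map_tau_loop induced_map_spec(1)[OF assms]])
  show "transfinite_product X x \<alpha> 0 = x" "transfinite_product X x \<alpha> 1 = x"
    using induced_map_spec(2)[OF assms] by (simp_all add: transfinite_product_def HE_base_def)
qed

lemma transfinite_product_compose: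
  assumes null: "null_sequence X x \<alpha>" and k: "continuous_map X Y k"
  shows "transfinite_product Y (k x) (\<lambda>n. k \<circ> \<alpha> n) = k \<circ> transfinite_product X x \<alpha>"
proof
  fix t
  have "induced_map Y (k x) (\<lambda>n. k \<circ> \<alpha> n) (tau_loop t) = (k \<circ> induced_map X x \<alpha>) (tau_loop t)"
    using induced_map_spec(3)[OF null_sequence_compose[OF null k]] induced_map_spec(3)[OF null]
    by (intro eq_on_hawaiian_earringI[OF _ tau_loop_in_earring, where f = "induced_map Y (k x) (\<lambda>n. k \<circ> \<alpha> n)"]) simp
  then show "transfinite_product Y (k x) (\<lambda>n. k \<circ> \<alpha> n) t = (k \<circ> transfinite_product X x \<alpha>) t"
    by (simp add: transfinite_product_def)
qed

section \<open>Path homotopy in arbitrary spaces\<close>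

lemma path_homotopic_in_iff_homotopic_with:
  "path_homotopic_in X p q \<longleftrightarrow>
     homotopic_with (\<lambda>r. r 0 = p 0 \<and> r 1 = p 1) (top_of_set {0..1}) X p q"
  by (subst homotopic_with) (auto simp: path_homotopic_in_def)

lemma path_homotopic_in_endpoints:
  assumes "path_homotopic_in X p q"
  shows "q 0 = p 0" "q 1 = p 1"
  using homotopic_with_imp_property[OF assms[unfolded path_homotopic_in_iff_homotopic_with]]
  by auto

lemma path_homotopic_in_sym:
  assumes "path_homotopic_in X p q"
  shows "path_homotopic_in X q p"
  using homotopic_with_symD[OF assms[unfolded path_homotopic_in_iff_homotopic_with]]
    path_homotopic_in_endpoints[OF assms]
  by (simp add: path_homotopic_in_iff_homotopic_with)

lemma path_homotopic_in_trans:
  assumes "path_homotopic_in X p q" "path_homotopic_in X q r"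
  shows "path_homotopic_in X p r"
proof -
  have "homotopic_with (\<lambda>s. s 0 = p 0 \<and> s 1 = p 1) (top_of_set {0..1}) X q r"
    using assms(2) path_homotopic_in_endpoints[OF assms(1)]
    by (simp add: path_homotopic_in_iff_homotopic_with)
  with assms(1) show ?thesis
    unfolding path_homotopic_in_iff_homotopic_with by (rule homotopic_with_trans)
qed

lemma path_homotopic_in_compose:
  assumes "path_homotopic_in X p q" "continuous_map X Y g"
  shows "path_homotopic_in Y (g \<circ> p) (g \<circ> q)"
  using homotopic_with_compose_continuous_map_left[OF
      assms(1)[unfolded path_homotopic_in_iff_homotopic_with] assms(2)]
  by (simp add: path_homotopic_in_iff_homotopic_with)

lemma continuous_map_top_of_set_cases_le:
  fixes p :: "'a::topological_space \<Rightarrow> real"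
  assumes "continuous_map (top_of_set {z \<in> S. p z \<le> a}) X f"
    and "continuous_map (top_of_set {z \<in> S. a \<le> p z}) X g"
    and "continuous_on S p" and "\<And>z. z \<in> S \<Longrightarrow> p z = a \<Longrightarrow> f z = g z"
  shows "continuous_map (top_of_set S) X (\<lambda>z. if p z \<le> a then f z else g z)"
  using assms
  by (intro continuous_map_cases_le[where q = "\<lambda>z. a"])
     (simp_all add: subtopology_subtopology Int_def)

lemma continuous_map_top_of_set_compose:
  assumes "continuous_map (top_of_set T) X f" "continuous_on S \<phi>" "\<phi> ` S \<subseteq> T"
  shows "continuous_map (top_of_set S) X (\<lambda>z. f (\<phi> z))"
  using continuous_map_compose[of "top_of_set S" "top_of_set T" \<phi> X f] assms
  by (simp add: o_def image_subset_iff)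

lemma prod_topology_top_of_set:
  "prod_topology (top_of_set A) (top_of_set B) = top_of_set (A \<times> B)"
  by (metis subtopology_Times prod_topology_euclidean)

definition path_conj :: "(real \<Rightarrow> 'a) \<Rightarrow> (real \<Rightarrow> 'a) \<Rightarrow> real \<Rightarrow> 'a" where
  "path_conj \<gamma> r t =
     (if t \<le> 1/3 then \<gamma> (3 * t) else if t \<le> 2/3 then r (3 * t - 1) else \<gamma> (3 - 3 * t))"

lemma path_homotopic_in_path_conj:
  assumes \<gamma>: "pathin X \<gamma>" and hom: "path_homotopic_in X r r'"
    and r: "r 0 = \<gamma> 1" "r 1 = \<gamma> 1"
  shows "path_homotopic_in X (path_conj \<gamma> r) (path_conj \<gamma> r')"
proof -
  let ?S = "{0..1::real} \<times> {0..1::real}"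
  obtain h where h_cont: "continuous_map (top_of_set ?S) X h"
    and h_ends: "\<And>t. t \<in> {0..1} \<Longrightarrow> h (0, t) = r t \<and> h (1, t) = r' t"
    and h_fixed: "\<And>s. s \<in> {0..1} \<Longrightarrow> h (s, 0) = r 0 \<and> h (s, 1) = r 1"
    using hom unfolding path_homotopic_in_def prod_topology_top_of_set by blast
  define K where "K z = path_conj \<gamma> (\<lambda>u. h (fst z, u)) (snd z)" for z :: "real \<times> real"
  have \<gamma>_cont: "continuous_map (top_of_set {0..1}) X \<gamma>" using \<gamma> by (simp add: pathin_def)
  have upper: "continuous_map (top_of_set {z \<in> ?S. 1/3 \<le> snd z}) X
      (\<lambda>z. if snd z \<le> 2/3 then h (fst z, 3 * snd z - 1) else \<gamma> (3 - 3 * snd z))"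
  proof (rule continuous_map_top_of_set_cases_le)
    show "continuous_map (top_of_set {z \<in> {z \<in> ?S. 1/3 \<le> snd z}. snd z \<le> 2/3}) X
        (\<lambda>z. h (fst z, 3 * snd z - 1))"
      by (intro continuous_map_top_of_set_compose[OF h_cont] continuous_intros) auto
    show "continuous_map (top_of_set {z \<in> {z \<in> ?S. 1/3 \<le> snd z}. 2/3 \<le> snd z}) X
        (\<lambda>z. \<gamma> (3 - 3 * snd z))"
      by (intro continuous_map_top_of_set_compose[OF \<gamma>_cont] continuous_intros) auto
    fix z :: "real \<times> real" assume "z \<in> {z \<in> ?S. 1/3 \<le> snd z}" "snd z = 2/3"
    then have "3 * snd z - 1 = 1" "3 - 3 * snd z = 1" "fst z \<in> {0..1}" by auto
    then show "h (fst z, 3 * snd z - 1) = \<gamma> (3 - 3 * snd z)" using h_fixed r by simp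
  qed (intro continuous_intros)
  have K_cont: "continuous_map (top_of_set ?S) X K"
    unfolding K_def path_conj_def
  proof (rule continuous_map_top_of_set_cases_le[OF _ upper])
    show "continuous_map (top_of_set {z \<in> ?S. snd z \<le> 1/3}) X (\<lambda>z. \<gamma> (3 * snd z))"
      by (intro continuous_map_top_of_set_compose[OF \<gamma>_cont] continuous_intros) auto
    fix z :: "real \<times> real" assume "z \<in> ?S" "snd z = 1/3"
    then have "3 * snd z = 1" "3 * snd z - 1 = 0" "fst z \<in> {0..1}" by auto
    then show "\<gamma> (3 * snd z) = (if snd z \<le> 2/3 then h (fst z, 3 * snd z - 1) else \<gamma> (3 - 3 * snd z))"
      using h_fixed r by simp
  qed (intro continuous_intros)
  show ?thesis
    unfolding path_homotopic_in_def prod_topology_top_of_set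
  proof (intro exI[of _ K] conjI ballI)
    fix t :: real assume "t \<in> {0..1}"
    then show "K (0, t) = path_conj \<gamma> r t" "K (1, t) = path_conj \<gamma> r' t"
      using h_ends[of "3 * t - 1"] by (auto simp: K_def path_conj_def)
  qed (use K_cont in \<open>simp_all add: K_def path_conj_def\<close>)
qed

lemma path_homotopic_in_conj_free_homotopy:
  assumes H: "continuous_map (prod_topology (top_of_set {0..1::real}) X) X H"
    and H1: "\<And>y. H (1, y) = y"
    and R: "pathin X R" "R 0 = x" "R 1 = x"
  shows "path_homotopic_in X R (path_conj (\<lambda>u. H (1 - u, x)) (\<lambda>t. H (0, R t)))"
proof -
  let ?S = "{0..1::real} \<times> {0..1::real}"
  \<comment> \<open>\<open>c\<close> runs along the homotopy parameter on the outer thirds and \<open>d\<close> traverses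
    \<open>R\<close> on the middle third; sliding \<open>(1, t)\<close> to \<open>(c t, d t)\<close> deforms \<open>R\<close> into the conjugate\<close>
  define c where "c t = max 0 (max (1 - 3 * t) (3 * t - 2))" for t :: real
  define d where "d t = max 0 (min 1 (3 * t - 1))" for t :: real
  define L where "L = (\<lambda>z :: real \<times> real.
    H ((1 - fst z) + fst z * c (snd z), R ((1 - fst z) * snd z + fst z * d (snd z))))"
  have cd: "c t \<in> {0..1}" "d t \<in> {0..1}" if "t \<in> {0..1}" for t
    using that by (auto simp: c_def d_def)
  have conv: "(1 - s) * u + s * v \<in> {0..1}" if "s \<in> {0..1}" "u \<in> {0..1}" "v \<in> {0..1::real}" for s u v
    using that by (auto intro!: convex_bound_le)
  have "continuous_on ?S (\<lambda>z. (1 - fst z) + fst z * c (snd z))"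
    unfolding c_def by (intro continuous_intros)
  moreover have "(1 - fst z) + fst z * c (snd z) \<in> {0..1}" if "z \<in> ?S" for z
    using conv[of "fst z" 1 "c (snd z)"] cd[of "snd z"] that by (auto simp: mem_Times_iff)
  ultimately have first:
    "continuous_map (top_of_set ?S) (top_of_set {0..1}) (\<lambda>z. (1 - fst z) + fst z * c (snd z))"
    unfolding continuous_map_subtopology_eu by blast
  have "continuous_on ?S (\<lambda>z. (1 - fst z) * snd z + fst z * d (snd z))"
    unfolding d_def by (intro continuous_intros)
  moreover have "(1 - fst z) * snd z + fst z * d (snd z) \<in> {0..1}" if "z \<in> ?S" for z
    using conv[of "fst z" "snd z" "d (snd z)"] cd[of "snd z"] that by (auto simp: mem_Times_iff)
  then have "(\<lambda>z. (1 - fst z) * snd z + fst z * d (snd z)) ` ?S \<subseteq> {0..1}"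
    by blast
  ultimately have second:
    "continuous_map (top_of_set ?S) X (\<lambda>z. R ((1 - fst z) * snd z + fst z * d (snd z)))"
    by (rule continuous_map_top_of_set_compose[OF R(1)[unfolded pathin_def]])
  have "continuous_map (top_of_set ?S) X L"
    using continuous_map_compose[OF continuous_map_pairedI[OF first second] H]
    by (simp add: L_def o_def)
  moreover have "L (1, t) = path_conj (\<lambda>u. H (1 - u, x)) (\<lambda>t. H (0, R t)) t" for t
  proof -
    consider "t \<le> 1/3" | "1/3 < t" "t \<le> 2/3" | "2/3 < t" by linarith
    then show ?thesis
    proof cases
      case 1
      then have "c t = 1 - 3 * t" "d t = 0" by (auto simp: c_def d_def)
      then show ?thesis using 1 R(2) by (simp add: L_def path_conj_def)
    next
      case 2
      then have "c t = 0" "d t = 3 * t - 1" by (auto simp: c_def d_def)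
      then show ?thesis using 2 by (simp add: L_def path_conj_def)
    next
      case 3
      then have "c t = 3 * t - 2" "d t = 1" by (auto simp: c_def d_def)
      then show ?thesis using 3 R(3) by (simp add: L_def path_conj_def)
    qed
  qed
  moreover have "c 0 = 1" "d 0 = 0" "c 1 = 1" "d 1 = 1" by (simp_all add: c_def d_def)
  ultimately show ?thesis
    unfolding path_homotopic_in_def prod_topology_top_of_set
    using H1 R(2,3) by (intro exI[of _ L]) (simp add: L_def)
qed

lemma path_homotopic_in_compose_reflect:
  assumes k: "continuous_map X Y k" and g: "continuous_map Y X g"
    and gk: "homotopic_with (\<lambda>h. True) X X (g \<circ> k) id"
    and P: "pathin X P" "P 0 = x" "P 1 = x" and Q: "pathin X Q" "Q 0 = x" "Q 1 = x"
    and hom: "path_homotopic_in Y (k \<circ> P) (k \<circ> Q)"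
  shows "path_homotopic_in X P Q"
proof -
  obtain H where H: "continuous_map (prod_topology (top_of_set {0..1::real}) X) X H"
    and H0: "\<And>y. H (0, y) = g (k y)" and H1: "\<And>y. H (1, y) = y"
    using gk unfolding homotopic_with_def by auto
  define \<gamma> where "\<gamma> = (\<lambda>u. H (1 - u, x))"
  have x: "x \<in> topspace X" using P by (auto simp: pathin_def continuous_map_def)
  have "pathin X \<gamma>"
    unfolding pathin_def \<gamma>_def
    using x by (intro continuous_map_compose[OF _ H, unfolded o_def] continuous_map_pairedI)
      (auto simp: continuous_map_subtopology_eu intro!: continuous_intros)
  moreover have "path_homotopic_in X (g \<circ> (k \<circ> P)) (g \<circ> (k \<circ> Q))"
    by (rule path_homotopic_in_compose[OF hom g])
  ultimately have middle: "path_homotopic_in X (path_conj \<gamma> (g \<circ> k \<circ> P)) (path_conj \<gamma> (g \<circ> k \<circ> Q))"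
    using P(2,3) H0 by (intro path_homotopic_in_path_conj) (auto simp: \<gamma>_def o_assoc)
  have "path_homotopic_in X R (path_conj \<gamma> (g \<circ> k \<circ> R))"
    if "pathin X R" "R 0 = x" "R 1 = x" for R
    using path_homotopic_in_conj_free_homotopy[OF H H1 that] H0
    by (simp add: \<gamma>_def o_def)
  from this[OF P] this[OF Q] middle show ?thesis
    by (meson path_homotopic_in_sym path_homotopic_in_trans)
qed

lemma homotopy_equivalence_reflects_transfinitely_pi1_commutative:
  assumes he: "homotopy_equivalence X Y k"
    and comm: "transfinitely_pi1_commutative Y (k x)"
  shows "transfinitely_pi1_commutative X x"
  unfolding transfinitely_pi1_commutative_def
proof (intro allI impI, elim conjE)
  fix \<alpha> and \<phi> :: "nat \<Rightarrow> nat"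
  assume null: "null_sequence X x \<alpha>" and \<phi>: "bij_betw \<phi> {1..} {1..}"
  have null\<phi>: "null_sequence X x (\<alpha> \<circ> \<phi>)" by (rule null_sequence_permute[OF null \<phi>])
  obtain g where k: "continuous_map X Y k" and g: "continuous_map Y X g"
    and gk: "homotopic_with (\<lambda>h. True) X X (g \<circ> k) id"
    using he unfolding homotopy_equivalence_def by blast
  have "path_homotopic_in Y (transfinite_product Y (k x) (\<lambda>n. k \<circ> \<alpha> n))
      (transfinite_product Y (k x) ((\<lambda>n. k \<circ> \<alpha> n) \<circ> \<phi>))"
    using comm null_sequence_compose[OF null k] \<phi>
    unfolding transfinitely_pi1_commutative_def by blast
  moreover have "(\<lambda>n. k \<circ> \<alpha> n) \<circ> \<phi> = (\<lambda>n. k \<circ> (\<alpha> \<circ> \<phi>) n)" by auto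
  ultimately have "path_homotopic_in Y (k \<circ> transfinite_product X x \<alpha>)
      (k \<circ> transfinite_product X x (\<alpha> \<circ> \<phi>))"
    by (simp only: transfinite_product_compose[OF null k] transfinite_product_compose[OF null\<phi> k])
  then show "path_homotopic_in X (transfinite_product X x \<alpha>) (transfinite_product X x (\<alpha> \<circ> \<phi>))"
    by (rule path_homotopic_in_compose_reflect[OF k g gk
          transfinite_product_loop[OF null] transfinite_product_loop[OF null\<phi>]])
qed

lemma based_homotopy_equivalence_imp_homotopy_equivalence:
  "based_homotopy_equivalence X x Y y f \<Longrightarrow> homotopy_equivalence X Y f"
  unfolding based_homotopy_equivalence_def homotopy_equivalence_def
  by (blast intro: homotopic_with_mono)

lemma based_homotopy_equivalence_sym:
  "based_homotopy_equivalence X x Y y f \<Longrightarrow> \<exists>g. based_homotopy_equivalence Y y X x g"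
  unfolding based_homotopy_equivalence_def by blast

theorem mainTheorem5:
  fixes X :: "'a topology" and Y :: "'b topology"
  shows "(\<forall>k x. homotopy_equivalence X Y k \<and> x \<in> topspace X \<and>
            transfinitely_pi1_commutative Y (k x) \<longrightarrow> transfinitely_pi1_commutative X x) \<and>
         (\<forall>f x y. based_homotopy_equivalence X x Y y f \<longrightarrow>
            (transfinitely_pi1_commutative X x \<longleftrightarrow> transfinitely_pi1_commutative Y y))"
proof (intro conjI allI impI)
  fix k x
  assume "homotopy_equivalence X Y k \<and> x \<in> topspace X \<and> transfinitely_pi1_commutative Y (k x)"
  then show "transfinitely_pi1_commutative X x"
    using homotopy_equivalence_reflects_transfinitely_pi1_commutative[of X Y k x] by blast
next
  fix f x y
  assume f: "based_homotopy_equivalence X x Y y f"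
  then obtain g where g: "based_homotopy_equivalence Y y X x g"
    using based_homotopy_equivalence_sym[OF f] by blast
  have "f x = y" "g y = x"
    using f g by (simp_all add: based_homotopy_equivalence_def)
  then show "transfinitely_pi1_commutative X x \<longleftrightarrow> transfinitely_pi1_commutative Y y"
    using homotopy_equivalence_reflects_transfinitely_pi1_commutative[of X Y f x]
      homotopy_equivalence_reflects_transfinitely_pi1_commutative[of Y X g y]
      based_homotopy_equivalence_imp_homotopy_equivalence[OF f]
      based_homotopy_equivalence_imp_homotopy_equivalence[OF g]
    by auto
qed

end
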